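(* Let $G$ be a group, $N$ a normal subgroup, $m\in\mathbb{N}$ and $x,x_1,\dots,x_m\in N$ with $x_1\cdots x_m\in[G,N]$. Then \[\mathrm{scl}_{G,N}\Big(x+x^{-1}+\sum_{i=1}^mx_i\Big)=\mathrm{scl}_{G,N}\Big(\sum_{i=1}^mx_i\Big).\]
   Context: $\mathrm{cl}_{G,N}$ is the word length on $[G,N]$ with respect to $\{[g,x]=gxg^{-1}x^{-1}:g\in G,x\in N\}$. For a finite list $y_1,\dots,y_r\in N$ (repetitions allowed) with $y_1\cdots y_r\in[G,N]$, $\mathrm{cl}_{G,N}(y_1+\cdots+y_r)=\inf_{g_i\in G}\mathrm{cl}_{G,N}(y_1g_1y_2g_1^{-1}\cdots g_{r-1}y_rg_{r-1}^{-1})$ and $\mathrm{scl}_{G,N}(y_1+\cdots+y_r)=\lim_{n\to\infty}\frac1n\mathrm{cl}_{G,N}(y_1^n+\cdots+y_r^n)$. *)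

theory Defs
  imports Complex_Main "HOL-Algebra.Algebra"
begin

definition commutators :: "('a, 'b) monoid_scheme \<Rightarrow> 'a set \<Rightarrow> 'a set" where
  "commutators G N = {g \<otimes>\<^bsub>G\<^esub> x \<otimes>\<^bsub>G\<^esub> inv\<^bsub>G\<^esub> g \<otimes>\<^bsub>G\<^esub> inv\<^bsub>G\<^esub> x
                      | g x. g \<in> carrier G \<and> x \<in> N}"

definition comm_subgroup :: "('a, 'b) monoid_scheme \<Rightarrow> 'a set \<Rightarrow> 'a set" where
  "comm_subgroup G N = generate G (commutators G N)"

text \<open>Word length cl_{G,N}(z) on [G,N]: least number of commutators whose product is z.
  (The commutator set is closed under inverses, so no inverses are needed.)\<close>
definition cl :: "('a, 'b) monoid_scheme \<Rightarrow> 'a set \<Rightarrow> 'a \<Rightarrow> nat" where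
  "cl G N z = Inf {length cs | cs. set cs \<subseteq> commutators G N \<and> foldr (\<otimes>\<^bsub>G\<^esub>) cs \<one>\<^bsub>G\<^esub> = z}"

text \<open>y_1 (g_1 y_2 g_1^-1) ... (g_{r-1} y_r g_{r-1}^-1); the element ys!i (i \<ge> 1) is
  conjugated by g i, the element ys!0 is not conjugated.\<close>
definition chain_prod :: "('a, 'b) monoid_scheme \<Rightarrow> (nat \<Rightarrow> 'a) \<Rightarrow> 'a list \<Rightarrow> 'a" where
  "chain_prod G g ys = foldr (\<otimes>\<^bsub>G\<^esub>)
     (map (\<lambda>i. if i = 0 then ys ! i else g i \<otimes>\<^bsub>G\<^esub> ys ! i \<otimes>\<^bsub>G\<^esub> inv\<^bsub>G\<^esub> (g i)) [0..<length ys])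
     \<one>\<^bsub>G\<^esub>"

definition cl_chain :: "('a, 'b) monoid_scheme \<Rightarrow> 'a set \<Rightarrow> 'a list \<Rightarrow> nat" where
  "cl_chain G N ys = Inf {cl G N (chain_prod G g ys) | g. \<forall>i. g i \<in> carrier G}"

definition scl_chain :: "('a, 'b) monoid_scheme \<Rightarrow> 'a set \<Rightarrow> 'a list \<Rightarrow> real" where
  "scl_chain G N ys = lim (\<lambda>n. real (cl_chain G N (map (\<lambda>y. y [^]\<^bsub>G\<^esub> n) ys)) / real n)"

end

theory Submission
  imports Defs
begin

text \<open>Adjoining the cancelling pair \<open>x + x\<inverse>\<close> to a chain changes \<open>cl\<^sub>G\<^sub>,\<^sub>N\<close> by at most one.
  Since \<open>cl\<close> is conjugation invariant, the infimum defining \<open>cl\<^sub>G\<^sub>,\<^sub>N\<close> of a chain may let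
  every entry be conjugated. A product \<open>(f\<^sub>0 x f\<^sub>0\<inverse>)(f\<^sub>1 x\<inverse> f\<^sub>1\<inverse>) P\<close> is then a single
  commutator (\<open>y k y\<inverse> k\<inverse>\<close> with \<open>y = f\<^sub>0 x f\<^sub>0\<inverse> \<in> N\<close>, \<open>k = f\<^sub>1 f\<^sub>0\<inverse>\<close>) times a product \<open>P\<close> for the shorter
  chain, and \<open>f\<^sub>0 = f\<^sub>1 = 1\<close> makes that commutator trivial. Applied to \<open>n\<close>-th powers, the
  sequences defining the two stable lengths differ by at most \<open>1/n\<close>, hence have the same
  limit. The hypothesis \<open>x\<^sub>1\<cdots>x\<^sub>m \<in> [G,N]\<close> is not needed: for chains whose products lie
  outside \<open>[G,N]\<close> all lengths take the junk value \<open>Inf {} = 0\<close>, and the estimates still hold.\<close>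

definition conj_prod :: "('a, 'b) monoid_scheme \<Rightarrow> (nat \<Rightarrow> 'a) \<Rightarrow> 'a list \<Rightarrow> 'a" where
  "conj_prod G f ys = foldr (\<otimes>\<^bsub>G\<^esub>)
     (map (\<lambda>i. f i \<otimes>\<^bsub>G\<^esub> ys ! i \<otimes>\<^bsub>G\<^esub> inv\<^bsub>G\<^esub> (f i)) [0..<length ys]) \<one>\<^bsub>G\<^esub>"

lemma conj_prod_Nil [simp]: "conj_prod G f [] = \<one>\<^bsub>G\<^esub>"
  by (simp add: conj_prod_def)

lemma conj_prod_Cons [simp]:
  "conj_prod G f (y # ys) =
     (f 0 \<otimes>\<^bsub>G\<^esub> y \<otimes>\<^bsub>G\<^esub> inv\<^bsub>G\<^esub> (f 0)) \<otimes>\<^bsub>G\<^esub> conj_prod G (\<lambda>i. f (Suc i)) ys"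
proof -
  have "[0..<length (y # ys)] = 0 # map Suc [0..<length ys]"
    by (simp add: upt_conv_Cons map_Suc_upt del: upt_Suc)
  then show ?thesis
    by (simp add: conj_prod_def o_def)
qed

definition commutator_word_lengths :: "('a, 'b) monoid_scheme \<Rightarrow> 'a set \<Rightarrow> 'a \<Rightarrow> nat set" where
  "commutator_word_lengths G N z =
     {length cs | cs. set cs \<subseteq> commutators G N \<and> foldr (\<otimes>\<^bsub>G\<^esub>) cs \<one>\<^bsub>G\<^esub> = z}"

lemma cl_eq_Inf_commutator_word_lengths: "cl G N z = Inf (commutator_word_lengths G N z)"
  by (simp add: cl_def commutator_word_lengths_def)

context group
begin

lemma inv_mult_cancel_left [simp]: "x \<in> carrier G \<Longrightarrow> y \<in> carrier G \<Longrightarrow> inv x \<otimes> (x \<otimes> y) = y"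
  by (simp flip: m_assoc)

lemma mult_inv_cancel_left [simp]: "x \<in> carrier G \<Longrightarrow> y \<in> carrier G \<Longrightarrow> x \<otimes> (inv x \<otimes> y) = y"
  by (simp flip: m_assoc)

lemma conj_prod_closed [intro, simp]:
  "(\<And>i. f i \<in> carrier G) \<Longrightarrow> set ys \<subseteq> carrier G \<Longrightarrow> conj_prod G f ys \<in> carrier G"
  by (induction ys arbitrary: f) auto

lemma conj_prod_mult_conjugators:
  assumes "k \<in> carrier G" and "\<And>i. f i \<in> carrier G" and "set ys \<subseteq> carrier G"
  shows "conj_prod G (\<lambda>i. k \<otimes> f i) ys = k \<otimes> conj_prod G f ys \<otimes> inv k"
  using assms(2,3)
proof (induction ys arbitrary: f)
  case Nil
  then show ?case
    using assms(1) by simp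
next
  case (Cons y ys)
  have "conj_prod G (\<lambda>i. f (Suc i)) ys \<in> carrier G"
    using Cons.prems by auto
  then show ?case
    using Cons assms(1) by (simp add: inv_mult_group m_assoc)
qed

lemma chain_prod_eq_conj_prod:
  assumes "set ys \<subseteq> carrier G"
  shows "chain_prod G g ys = conj_prod G (g(0 := \<one>)) ys"
  unfolding chain_prod_def conj_prod_def
  using assms by (intro arg_cong[where f = "\<lambda>l. foldr (\<otimes>) l \<one>"] map_cong) (auto simp: subset_iff)

lemma foldr_mult_map_conj:
  assumes "set cs \<subseteq> carrier G" and "k \<in> carrier G"
  shows "foldr (\<otimes>) (map (\<lambda>c. k \<otimes> c \<otimes> inv k) cs) \<one> = k \<otimes> foldr (\<otimes>) cs \<one> \<otimes> inv k"
  using assms(1)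
proof (induction cs)
  case (Cons c cs)
  have "foldr (\<otimes>) cs \<one> \<in> carrier G"
    using Cons.prems by (induction cs) auto
  then show ?case
    using Cons assms(2) by (simp add: m_assoc)
qed (use assms(2) in simp)

lemma normal_subset_carrier: "N \<lhd> G \<Longrightarrow> N \<subseteq> carrier G"
  by (rule subgroup.subset[OF normal_imp_subgroup])

lemma commutators_in_carrier:
  "N \<lhd> G \<Longrightarrow> c \<in> commutators G N \<Longrightarrow> c \<in> carrier G"
  using normal_subset_carrier unfolding commutators_def by blast

lemma commutator_mem_commutators:
  "g \<in> carrier G \<Longrightarrow> x \<in> N \<Longrightarrow> g \<otimes> x \<otimes> inv g \<otimes> inv x \<in> commutators G N"
  unfolding commutators_def by blast

lemma commutators_inv_closed:
  assumes "N \<lhd> G" and "c \<in> commutators G N"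
  shows "inv c \<in> commutators G N"
proof -
  have NG: "N \<subseteq> carrier G"
    using assms(1) by (rule normal_subset_carrier)
  obtain g x where g: "g \<in> carrier G" and x: "x \<in> N" and c: "c = g \<otimes> x \<otimes> inv g \<otimes> inv x"
    using assms(2) unfolding commutators_def by auto
  have "x \<in> carrier G"
    using x NG by auto
  then have "inv c = inv g \<otimes> (g \<otimes> x \<otimes> inv g) \<otimes> inv (inv g) \<otimes> inv (g \<otimes> x \<otimes> inv g)"
    using g c by (simp add: inv_mult_group m_assoc)
  moreover have "g \<otimes> x \<otimes> inv g \<in> N"
    using assms(1) g x by (simp add: normal.inv_op_closed2)
  ultimately show ?thesis
    using g commutator_mem_commutators by (metis inv_closed)
qed

lemma commutators_conj_closed:
  assumes "N \<lhd> G" and "c \<in> commutators G N" and k: "k \<in> carrier G"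
  shows "k \<otimes> c \<otimes> inv k \<in> commutators G N"
proof -
  have NG: "N \<subseteq> carrier G"
    using assms(1) by (rule normal_subset_carrier)
  obtain g x where g: "g \<in> carrier G" and x: "x \<in> N" and c: "c = g \<otimes> x \<otimes> inv g \<otimes> inv x"
    using assms(2) unfolding commutators_def by auto
  have "x \<in> carrier G"
    using x NG by auto
  then have "k \<otimes> c \<otimes> inv k =
      (k \<otimes> g \<otimes> inv k) \<otimes> (k \<otimes> x \<otimes> inv k) \<otimes> inv (k \<otimes> g \<otimes> inv k) \<otimes> inv (k \<otimes> x \<otimes> inv k)"
    using g k c by (simp add: inv_mult_group m_assoc)
  moreover have "k \<otimes> x \<otimes> inv k \<in> N"
    using assms(1) k x by (simp add: normal.inv_op_closed2)
  ultimately show ?thesis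
    using g k by (simp add: commutator_mem_commutators)
qed

lemma commutator_word_lengths_conj_subset:
  assumes "N \<lhd> G" and "k \<in> carrier G"
  shows "commutator_word_lengths G N z \<subseteq> commutator_word_lengths G N (k \<otimes> z \<otimes> inv k)"
proof
  fix l
  assume "l \<in> commutator_word_lengths G N z"
  then obtain cs where l: "l = length cs" and cs: "set cs \<subseteq> commutators G N"
    and z: "foldr (\<otimes>) cs \<one> = z"
    unfolding commutator_word_lengths_def by auto
  let ?cs' = "map (\<lambda>c. k \<otimes> c \<otimes> inv k) cs"
  have "set cs \<subseteq> carrier G"
    using cs assms(1) commutators_in_carrier by blast
  then have "foldr (\<otimes>) ?cs' \<one> = k \<otimes> z \<otimes> inv k"
    using z assms(2) by (simp add: foldr_mult_map_conj)
  moreover have "set ?cs' \<subseteq> commutators G N"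
    using cs assms commutators_conj_closed by auto
  ultimately show "l \<in> commutator_word_lengths G N (k \<otimes> z \<otimes> inv k)"
    unfolding commutator_word_lengths_def l by (intro CollectI exI[of _ ?cs']) simp
qed

lemma cl_conj:
  assumes "N \<lhd> G" and "k \<in> carrier G" and "z \<in> carrier G"
  shows "cl G N (k \<otimes> z \<otimes> inv k) = cl G N z"
proof -
  have "inv k \<otimes> (k \<otimes> z \<otimes> inv k) \<otimes> inv (inv k) = z"
    using assms(2,3) by (simp add: m_assoc)
  then have "commutator_word_lengths G N (k \<otimes> z \<otimes> inv k) \<subseteq> commutator_word_lengths G N z"
    using commutator_word_lengths_conj_subset[OF assms(1), of "inv k" "k \<otimes> z \<otimes> inv k"] assms(2)
    by simp
  then have "commutator_word_lengths G N (k \<otimes> z \<otimes> inv k) = commutator_word_lengths G N z"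
    using commutator_word_lengths_conj_subset[OF assms(1,2)] by blast
  then show ?thesis
    by (simp add: cl_eq_Inf_commutator_word_lengths)
qed

text \<open>If \<open>c \<otimes> z\<close> is not a product of commutators, neither is \<open>z\<close>, and both lengths are
  the junk value \<open>Inf {} = 0\<close>.\<close>

lemma cl_le_cl_commutator_mult:
  assumes "N \<lhd> G" and c: "c \<in> commutators G N" and z: "z \<in> carrier G"
  shows "cl G N z \<le> cl G N (c \<otimes> z) + 1"
proof (cases "commutator_word_lengths G N (c \<otimes> z) = {}")
  case True
  have "commutator_word_lengths G N z = {}"
  proof (rule ccontr)
    assume "commutator_word_lengths G N z \<noteq> {}"
    then obtain cs where "set cs \<subseteq> commutators G N" and "foldr (\<otimes>) cs \<one> = z"
      unfolding commutator_word_lengths_def by auto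
    then have "length (c # cs) \<in> commutator_word_lengths G N (c \<otimes> z)"
      unfolding commutator_word_lengths_def using c by (intro CollectI exI[of _ "c # cs"]) simp
    then show False
      using True by simp
  qed
  then show ?thesis
    using True by (simp add: cl_eq_Inf_commutator_word_lengths)
next
  case False
  then have "cl G N (c \<otimes> z) \<in> commutator_word_lengths G N (c \<otimes> z)"
    unfolding cl_eq_Inf_commutator_word_lengths by (rule Inf_nat_def1)
  then obtain cs where len: "cl G N (c \<otimes> z) = length cs" and cs: "set cs \<subseteq> commutators G N"
    and prod: "foldr (\<otimes>) cs \<one> = c \<otimes> z"
    unfolding commutator_word_lengths_def by blast
  have "c \<in> carrier G"
    using assms(1) c by (rule commutators_in_carrier)
  then have "foldr (\<otimes>) (inv c # cs) \<one> = z"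
    using prod z by (simp flip: m_assoc)
  moreover have "set (inv c # cs) \<subseteq> commutators G N"
    using cs c assms(1) commutators_inv_closed by auto
  ultimately have "length (inv c # cs) \<in> commutator_word_lengths G N z"
    unfolding commutator_word_lengths_def by blast
  then show ?thesis
    using len by (simp add: cl_eq_Inf_commutator_word_lengths cInf_lower)
qed

lemma cl_chain_eq_Inf_conj_prod:
  assumes "N \<lhd> G" and "set ys \<subseteq> carrier G"
  shows "cl_chain G N ys = Inf {cl G N (conj_prod G f ys) | f. \<forall>i. f i \<in> carrier G}"
proof -
  have "{cl G N (chain_prod G g ys) | g. \<forall>i. g i \<in> carrier G} =
        {cl G N (conj_prod G f ys) | f. \<forall>i. f i \<in> carrier G}"
  proof (intro equalityI subsetI)
    fix v
    assume "v \<in> {cl G N (chain_prod G g ys) | g. \<forall>i. g i \<in> carrier G}"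
    then obtain g where "\<forall>i. g i \<in> carrier G" and "v = cl G N (conj_prod G (g(0 := \<one>)) ys)"
      using assms(2) by (auto simp: chain_prod_eq_conj_prod)
    then show "v \<in> {cl G N (conj_prod G f ys) | f. \<forall>i. f i \<in> carrier G}"
      by (intro CollectI exI[of _ "g(0 := \<one>)"]) auto
  next
    fix v
    assume "v \<in> {cl G N (conj_prod G f ys) | f. \<forall>i. f i \<in> carrier G}"
    then obtain f where f: "\<And>i. f i \<in> carrier G" and v: "v = cl G N (conj_prod G f ys)"
      by auto
    define h where "h i = inv (f 0) \<otimes> f i" for i
    have h: "\<And>i. h i \<in> carrier G"
      using f by (simp add: h_def)
    have "h(0 := \<one>) = h"
      using f by (auto simp: h_def fun_eq_iff)
    then have "chain_prod G h ys = conj_prod G h ys"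
      using assms(2) by (simp add: chain_prod_eq_conj_prod)
    moreover have "conj_prod G f ys = conj_prod G (\<lambda>i. f 0 \<otimes> h i) ys"
      using f by (simp add: h_def)
    moreover have "\<dots> = f 0 \<otimes> conj_prod G h ys \<otimes> inv (f 0)"
      using f h assms(2) by (intro conj_prod_mult_conjugators) auto
    ultimately have "v = cl G N (chain_prod G h ys)"
      using v f h assms by (simp add: cl_conj)
    then show "v \<in> {cl G N (chain_prod G g ys) | g. \<forall>i. g i \<in> carrier G}"
      using h by blast
  qed
  then show ?thesis
    by (simp add: cl_chain_def)
qed

lemma cl_chain_Cons_inv_le:
  assumes "N \<lhd> G" and a: "a \<in> carrier G" and ys: "set ys \<subseteq> carrier G"
  shows "cl_chain G N (a # inv a # ys) \<le> cl_chain G N ys"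
proof -
  let ?S = "\<lambda>zs. {cl G N (conj_prod G f zs) | f. \<forall>i. f i \<in> carrier G}"
  have "?S ys \<subseteq> ?S (a # inv a # ys)"
  proof
    fix v
    assume "v \<in> ?S ys"
    then obtain f where f: "\<forall>i. f i \<in> carrier G" and v: "v = cl G N (conj_prod G f ys)"
      by auto
    define g where "g i = (if i < 2 then \<one> else f (i - 2))" for i
    have "conj_prod G g (a # inv a # ys) = a \<otimes> (inv a \<otimes> conj_prod G f ys)"
      using a by (simp add: g_def)
    also have "\<dots> = conj_prod G f ys"
      using a ys f by simp
    finally show "v \<in> ?S (a # inv a # ys)"
      using f v by (intro CollectI exI[of _ g]) (simp add: g_def)
  qed
  moreover have "?S ys \<noteq> {}"
    by (auto intro: exI[of _ "\<lambda>_. \<one>"])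
  ultimately have "Inf (?S (a # inv a # ys)) \<le> Inf (?S ys)"
    by (meson cInf_superset_mono bdd_below_bot)
  then show ?thesis
    using assms by (simp add: cl_chain_eq_Inf_conj_prod)
qed

lemma cl_chain_le_Cons_inv:
  assumes N: "N \<lhd> G" and a: "a \<in> N" and ys: "set ys \<subseteq> carrier G"
  shows "cl_chain G N ys \<le> cl_chain G N (a # inv a # ys) + 1"
proof -
  have aG: "a \<in> carrier G"
    using a normal_subset_carrier[OF N] by blast
  let ?S = "{cl G N (conj_prod G f (a # inv a # ys)) | f. \<forall>i. f i \<in> carrier G}"
  have "?S \<noteq> {}"
    by (auto intro: exI[of _ "\<lambda>_. \<one>"])
  then have "Inf ?S \<in> ?S"
    by (rule Inf_nat_def1)
  then obtain f where f: "\<And>i. f i \<in> carrier G"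
    and min: "cl_chain G N (a # inv a # ys) = cl G N (conj_prod G f (a # inv a # ys))"
    using N aG ys by (auto simp: cl_chain_eq_Inf_conj_prod)
  let ?P = "conj_prod G (\<lambda>i. f (Suc (Suc i))) ys"
  define y where "y = f 0 \<otimes> a \<otimes> inv (f 0)"
  define k where "k = f 1 \<otimes> inv (f 0)"
  have yN: "y \<in> N"
    using N f a by (simp add: y_def normal.inv_op_closed2)
  have kG: "k \<in> carrier G"
    using f by (simp add: k_def)
  define c where "c = inv (k \<otimes> y \<otimes> inv k \<otimes> inv y)"
  have c: "c \<in> commutators G N"
    unfolding c_def using N kG yN by (intro commutators_inv_closed commutator_mem_commutators)
  have "conj_prod G f (a # inv a # ys) = (f 0 \<otimes> a \<otimes> inv (f 0) \<otimes> (f 1 \<otimes> inv a \<otimes> inv (f 1))) \<otimes> ?P"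
    using f aG ys by (simp add: m_assoc)
  also have "f 0 \<otimes> a \<otimes> inv (f 0) \<otimes> (f 1 \<otimes> inv a \<otimes> inv (f 1)) = c"
    using f aG by (simp add: c_def y_def k_def inv_mult_group m_assoc)
  finally have "cl G N ?P \<le> cl_chain G N (a # inv a # ys) + 1"
    using min cl_le_cl_commutator_mult[OF N c] f ys by simp
  moreover have "cl_chain G N ys \<le> cl G N ?P"
    using N ys f by (simp add: cl_chain_eq_Inf_conj_prod) (intro cInf_lower, auto)
  ultimately show ?thesis
    by linarith
qed

lemma cl_chain_Cons_inv_dist_le_1:
  assumes "N \<lhd> G" and "a \<in> N" and "set ys \<subseteq> carrier G"
  shows "\<bar>real (cl_chain G N (a # inv a # ys)) - real (cl_chain G N ys)\<bar> \<le> 1"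
  using cl_chain_Cons_inv_le[OF assms(1) _ assms(3), of a] cl_chain_le_Cons_inv[OF assms]
    normal_subset_carrier[OF assms(1)] assms(2) by fastforce

lemma normal_nat_pow_closed: "N \<lhd> G \<Longrightarrow> y \<in> N \<Longrightarrow> y [^] (n::nat) \<in> N"
  by (metis normal_imp_subgroup int_pow_int subgroup_int_pow_closed)

end

lemma lim_divide_eq_if_bounded_diff:
  fixes a b :: "nat \<Rightarrow> real"
  assumes "\<And>n. \<bar>a n - b n\<bar> \<le> C"
  shows "lim (\<lambda>n. a n / real n) = lim (\<lambda>n. b n / real n)"
proof -
  have bound: "- (C / real n) \<le> a n / real n - b n / real n \<and> a n / real n - b n / real n \<le> C / real n"
    for n
  proof -
    have "\<bar>a n / real n - b n / real n\<bar> \<le> C / real n"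
      using assms[of n] by (simp add: diff_divide_distrib[symmetric] abs_divide divide_right_mono)
    then show ?thesis
      by (simp add: abs_le_iff)
  qed
  have diff: "(\<lambda>n. a n / real n - b n / real n) \<longlonglongrightarrow> 0"
  proof (rule real_tendsto_sandwich[of "\<lambda>n. - (C / real n)" _ _ "\<lambda>n. C / real n"])
    show "\<forall>\<^sub>F n in sequentially. - (C / real n) \<le> a n / real n - b n / real n"
      and "\<forall>\<^sub>F n in sequentially. a n / real n - b n / real n \<le> C / real n"
      using bound by (simp_all add: always_eventually)
    show "(\<lambda>n. - (C / real n)) \<longlonglongrightarrow> 0" and "(\<lambda>n. C / real n) \<longlonglongrightarrow> 0"
      using tendsto_minus[OF lim_const_over_n[of C]] lim_const_over_n[of C] by simp_all
  qed
  have "(\<lambda>n. a n / real n) \<longlonglongrightarrow> L \<longleftrightarrow> (\<lambda>n. b n / real n) \<longlonglongrightarrow> L" for L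
  proof
    assume "(\<lambda>n. a n / real n) \<longlonglongrightarrow> L"
    then show "(\<lambda>n. b n / real n) \<longlonglongrightarrow> L"
      using diff by (rule Lim_transform2)
  next
    assume "(\<lambda>n. b n / real n) \<longlonglongrightarrow> L"
    then show "(\<lambda>n. a n / real n) \<longlonglongrightarrow> L"
      using diff by (rule Lim_transform)
  qed
  then show ?thesis
    by (simp add: lim_def)
qed

theorem lemma5p14:
  fixes G (structure) and N :: "'a set" and x :: 'a and xs :: "'a list"
  assumes "group G" and "N \<lhd> G"
    and "x \<in> N" and "set xs \<subseteq> N"
    and "foldr (\<otimes>) xs \<one> \<in> comm_subgroup G N"
  shows "scl_chain G N (x # inv x # xs) = scl_chain G N xs"
proof -
  interpret group G by fact
  have N_carrier: "N \<subseteq> carrier G"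
    using assms(2) by (rule normal_subset_carrier)
  define ys where "ys n = map (\<lambda>y. y [^] n) xs" for n :: nat
  have "map (\<lambda>y. y [^] n) (x # inv x # xs) = x [^] n # inv (x [^] n) # ys n" for n :: nat
    using assms(3) N_carrier by (auto simp: ys_def nat_pow_inv)
  then have "scl_chain G N (x # inv x # xs) =
      lim (\<lambda>n. real (cl_chain G N (x [^] n # inv (x [^] n) # ys n)) / real n)"
    by (simp add: scl_chain_def)
  also have "\<dots> = lim (\<lambda>n. real (cl_chain G N (ys n)) / real n)"
    using assms(2-4) N_carrier
    by (intro lim_divide_eq_if_bounded_diff[where C = 1] cl_chain_Cons_inv_dist_le_1 normal_nat_pow_closed)
      (auto simp: ys_def)
  also have "\<dots> = scl_chain G N xs"
    by (simp add: scl_chain_def ys_def)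
  finally show ?thesis .
qed

end
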